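(* Let $(\mathcal A,\varphi,\mathcal F,\Phi)$ be a ncps of type B$'$ with associated infinitesimal ncps $(\mathcal B,\varphi,\varphi')$. Let $a\in\mathcal A$ and $f\in\mathcal F$ be such that (unital subalgebra generated by $a$, subalgebra generated by $f$) is cyclic-antimonotone independent. Let $\mu$ be the distribution of $a$ with respect to $\varphi$ and $\nu$ the distribution of $f$ with respect to $\varphi'$. Then the infinitesimal distribution of $a+f$ with respect to $(\varphi,\varphi')$ is $(\mu,\tilde\nu)$, where $\tilde\nu$ (the cyclic-antimonotone convolution of $\mu$ and $\nu$) equals the second component of the infinitesimal free convolution $(\mu,0)\boxplus(\delta_0,\nu)$, and is characterized by $$G_{\tilde\nu}(z)=G_\nu(F_\mu(z))\,F_\mu'(z)$$ as formal series.
   Context: A ncps of type B$'$ is $(\mathcal A,\varphi,\mathcal F,\Phi)$: $\mathcal A$ unital complex algebra, $\varphi$ linear on $\mathcal A$ with $\varphi(1_{\mathcal A})=1$, $\mathcal F$ an algebra that is an $\mathcal A$-bimodule compatible with its multiplication, $\Phi:\mathcal F\to\mathbb C$ linear. $\mathcal B=\mathcal A\oplus\mathcal F$ with product $(a_1,f_1)(a_2,f_2)=(a_1a_2,a_1f_2+f_1a_2+f_1f_2)$, unit $1_{\mathcal A}$; $\varphi(a+f):=\varphi(a)$, $\varphi'(a+f):=\Phi(f)$. Cyclic-antimonotone independence of $(\mathcal A_1,\mathcal F_1)$: $\Phi(a_0f_1a_1\cdots a_{n-1}f_na_n)=\varphi(a_0a_n)\prod_{i=1}^{n-1}\varphi(a_i)\,\Phi(f_1\cdots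 f_n)$ for $n\ge1$, $a_l\in\mathcal A_1$, $f_l\in\mathcal F_1$. A distribution is a linear functional $\mathbb C[x]\to\mathbb C$. The distribution of $b$ w.r.t. a functional $\omega$ is $x^n\mapsto\omega(b^n)$ ($b^0=1_{\mathcal B}$); the infinitesimal distribution of $b$ w.r.t. $(\varphi,\varphi')$ is the pair of its distributions w.r.t. $\varphi$ and $\varphi'$. $\delta_0$ is the distribution with $\delta_0(x^n)=\delta_{n,0}$. For a distribution $\mu$, $G_\mu(z)=\sum_{n\ge0}\mu(x^n)z^{-n-1}$ and $F_\mu=1/G_\mu$ (formal Laurent series), $F_\mu'$ its formal derivative. Infinitesimal freeness in an infinitesimal ncps $(\mathcal B,\varphi,\varphi')$ (with $\varphi(1)=1,\varphi'(1)=0$): unital subalgebras $(\mathcal B_i)$ are infinitesimally free if for alternating indices $i_1\ne i_2\ne\cdots\ne i_n$ and $b_l\in\mathcal B_{i_l}$ with $\varphi(b_l)=0$: $\varphi(b_1\cdots b_n)=0$ and $\varphi'(b_1\cdots b_n)=\varphi(b_1b_n)\varphi(b_2b_{n-1})\cdots\varphi'(b_{(n+1)/2})$ if $n$ odd and $i_1=i_n,i_2=i_{n-1},\dots$, and $0$ otherwise. The infinitesimal free convolution $(\mu_1,\mu_1')\boxplus(\mu_2,\mu_2')$ is the infinitesimal distribution of $b_1+b_2$ where $b_1,b_2$ generate infinitesimally free unital subalgebras in some infinitesimal ncps and have infinitesimal distributions $(\mu_1,\mu_1')$, $(\mu_2,\mu_2')$ (this is well defined). *)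

theory Defs
  imports Complex_Main "HOL-Computational_Algebra.Formal_Laurent_Series"
begin

definition is_calg :: "(complex \<Rightarrow> 'a::ring \<Rightarrow> 'a) \<Rightarrow> bool" where
  "is_calg sc \<longleftrightarrow>
     (\<forall>c x y. sc c (x + y) = sc c x + sc c y) \<and>
     (\<forall>c d x. sc (c + d) x = sc c x + sc d x) \<and>
     (\<forall>c d x. sc (c * d) x = sc c (sc d x)) \<and>
     (\<forall>x. sc 1 x = x) \<and>
     (\<forall>c x y. sc c (x * y) = sc c x * y) \<and>
     (\<forall>c x y. sc c (x * y) = x * sc c y)"

definition clinear_fun :: "(complex \<Rightarrow> 'a::ring \<Rightarrow> 'a) \<Rightarrow> ('a \<Rightarrow> complex) \<Rightarrow> bool" where
  "clinear_fun sc \<omega> \<longleftrightarrow> (\<forall>x y. \<omega> (x + y) = \<omega> x + \<omega> y) \<and> (\<forall>c x. \<omega> (sc c x) = c * \<omega> x)"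

definition is_compat_bimodule ::
  "(complex \<Rightarrow> 'a::ring_1 \<Rightarrow> 'a) \<Rightarrow> (complex \<Rightarrow> 'f::ring \<Rightarrow> 'f) \<Rightarrow>
   ('a \<Rightarrow> 'f \<Rightarrow> 'f) \<Rightarrow> ('f \<Rightarrow> 'a \<Rightarrow> 'f) \<Rightarrow> bool" where
  "is_compat_bimodule sa sf lm rm \<longleftrightarrow>
     (\<forall>a b x. lm (a * b) x = lm a (lm b x)) \<and> (\<forall>x. lm 1 x = x) \<and>
     (\<forall>a b x. lm (a + b) x = lm a x + lm b x) \<and> (\<forall>a x y. lm a (x + y) = lm a x + lm a y) \<and>
     (\<forall>c a x. lm (sa c a) x = sf c (lm a x)) \<and> (\<forall>c a x. lm a (sf c x) = sf c (lm a x)) \<and>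
     (\<forall>a b x. rm x (a * b) = rm (rm x a) b) \<and> (\<forall>x. rm x 1 = x) \<and>
     (\<forall>a b x. rm x (a + b) = rm x a + rm x b) \<and> (\<forall>a x y. rm (x + y) a = rm x a + rm y a) \<and>
     (\<forall>c a x. rm x (sa c a) = sf c (rm x a)) \<and> (\<forall>c a x. rm (sf c x) a = sf c (rm x a)) \<and>
     (\<forall>a b x. rm (lm a x) b = lm a (rm x b)) \<and>
     (\<forall>a x y. lm a (x * y) = lm a x * y) \<and>
     (\<forall>a x y. rm (x * y) a = x * rm y a) \<and>
     (\<forall>a x y. rm x a * y = x * lm a y)"

definition ncps_typeB' ::
  "(complex \<Rightarrow> 'a::ring_1 \<Rightarrow> 'a) \<Rightarrow> ('a \<Rightarrow> complex) \<Rightarrow>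
   (complex \<Rightarrow> 'f::ring \<Rightarrow> 'f) \<Rightarrow> ('a \<Rightarrow> 'f \<Rightarrow> 'f) \<Rightarrow> ('f \<Rightarrow> 'a \<Rightarrow> 'f) \<Rightarrow>
   ('f \<Rightarrow> complex) \<Rightarrow> bool" where
  "ncps_typeB' sa \<phi> sf lm rm \<Phi> \<longleftrightarrow>
     is_calg sa \<and> is_calg sf \<and> is_compat_bimodule sa sf lm rm \<and>
     clinear_fun sa \<phi> \<and> \<phi> 1 = 1 \<and> clinear_fun sf \<Phi>"

text \<open>Elements of B are pairs (a, f) standing for a + f.\<close>
definition bmul :: "('a::ring_1 \<Rightarrow> 'f::ring \<Rightarrow> 'f) \<Rightarrow> ('f \<Rightarrow> 'a \<Rightarrow> 'f) \<Rightarrow>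
    'a \<times> 'f \<Rightarrow> 'a \<times> 'f \<Rightarrow> 'a \<times> 'f" where
  "bmul lm rm x y = (fst x * fst y, lm (fst x) (snd y) + rm (snd x) (fst y) + snd x * snd y)"

fun bpow :: "('a::ring_1 \<Rightarrow> 'f::ring \<Rightarrow> 'f) \<Rightarrow> ('f \<Rightarrow> 'a \<Rightarrow> 'f) \<Rightarrow>
    'a \<times> 'f \<Rightarrow> nat \<Rightarrow> 'a \<times> 'f" where
  "bpow lm rm x 0 = (1, 0)"
| "bpow lm rm x (Suc n) = bmul lm rm (bpow lm rm x n) x"

definition phiB :: "('a \<Rightarrow> complex) \<Rightarrow> 'a \<times> 'f \<Rightarrow> complex" where
  "phiB \<phi> x = \<phi> (fst x)"

definition phiB' :: "('f \<Rightarrow> complex) \<Rightarrow> 'a \<times> 'f \<Rightarrow> complex" where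
  "phiB' \<Phi> x = \<Phi> (snd x)"

inductive_set ualg_gen :: "(complex \<Rightarrow> 'a::ring_1 \<Rightarrow> 'a) \<Rightarrow> 'a \<Rightarrow> 'a set"
  for sc :: "complex \<Rightarrow> 'a \<Rightarrow> 'a" and g :: 'a where
  one: "1 \<in> ualg_gen sc g"
| gen: "g \<in> ualg_gen sc g"
| add: "x \<in> ualg_gen sc g \<Longrightarrow> y \<in> ualg_gen sc g \<Longrightarrow> x + y \<in> ualg_gen sc g"
| mult: "x \<in> ualg_gen sc g \<Longrightarrow> y \<in> ualg_gen sc g \<Longrightarrow> x * y \<in> ualg_gen sc g"
| scal: "x \<in> ualg_gen sc g \<Longrightarrow> sc c x \<in> ualg_gen sc g"

inductive_set alg_gen :: "(complex \<Rightarrow> 'f::ring \<Rightarrow> 'f) \<Rightarrow> 'f \<Rightarrow> 'f set"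
  for sc :: "complex \<Rightarrow> 'f \<Rightarrow> 'f" and g :: 'f where
  gen: "g \<in> alg_gen sc g"
| add: "x \<in> alg_gen sc g \<Longrightarrow> y \<in> alg_gen sc g \<Longrightarrow> x + y \<in> alg_gen sc g"
| mult: "x \<in> alg_gen sc g \<Longrightarrow> y \<in> alg_gen sc g \<Longrightarrow> x * y \<in> alg_gen sc g"
| scal: "x \<in> alg_gen sc g \<Longrightarrow> sc c x \<in> alg_gen sc g"

fun fprod :: "(nat \<Rightarrow> 'f::ring) \<Rightarrow> nat \<Rightarrow> 'f" where
  "fprod f 0 = 0"
| "fprod f (Suc 0) = f 1"
| "fprod f (Suc (Suc n)) = fprod f (Suc n) * f (Suc (Suc n))"

fun alt_word :: "('a::ring_1 \<Rightarrow> 'f::ring \<Rightarrow> 'f) \<Rightarrow> ('f \<Rightarrow> 'a \<Rightarrow> 'f) \<Rightarrow>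
    (nat \<Rightarrow> 'a) \<Rightarrow> (nat \<Rightarrow> 'f) \<Rightarrow> nat \<Rightarrow> 'f" where
  "alt_word lm rm a f 0 = 0"
| "alt_word lm rm a f (Suc 0) = rm (lm (a 0) (f 1)) (a 1)"
| "alt_word lm rm a f (Suc (Suc n)) =
     rm (alt_word lm rm a f (Suc n) * f (Suc (Suc n))) (a (Suc (Suc n)))"

definition cyc_antimono_indep ::
  "('a::ring_1 \<Rightarrow> 'f::ring \<Rightarrow> 'f) \<Rightarrow> ('f \<Rightarrow> 'a \<Rightarrow> 'f) \<Rightarrow> ('a \<Rightarrow> complex) \<Rightarrow>
   ('f \<Rightarrow> complex) \<Rightarrow> 'a set \<Rightarrow> 'f set \<Rightarrow> bool" where
  "cyc_antimono_indep lm rm \<phi> \<Phi> A1 F1 \<longleftrightarrow>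
     (\<forall>n \<ge> 1. \<forall>a f. (\<forall>l \<le> n. a l \<in> A1) \<and> (\<forall>l \<in> {1..n}. f l \<in> F1) \<longrightarrow>
        \<Phi> (alt_word lm rm a f n) =
          \<phi> (a 0 * a n) * (\<Prod>i = 1..n-1. \<phi> (a i)) * \<Phi> (fprod f n))"

definition inf_ncps :: "(complex \<Rightarrow> 'c::ring_1 \<Rightarrow> 'c) \<Rightarrow> ('c \<Rightarrow> complex) \<Rightarrow> ('c \<Rightarrow> complex) \<Rightarrow> bool" where
  "inf_ncps sc \<psi> \<psi>' \<longleftrightarrow> is_calg sc \<and> clinear_fun sc \<psi> \<and> clinear_fun sc \<psi>' \<and> \<psi> 1 = 1 \<and> \<psi>' 1 = 0"

definition inf_free :: "('c::ring_1 \<Rightarrow> complex) \<Rightarrow> ('c \<Rightarrow> complex) \<Rightarrow> ('i \<Rightarrow> 'c set) \<Rightarrow> bool" where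
  "inf_free \<psi> \<psi>' S \<longleftrightarrow>
     (\<forall>n \<ge> 1. \<forall>(ix :: nat \<Rightarrow> 'i) (b :: nat \<Rightarrow> 'c).
        (\<forall>l. 1 \<le> l \<and> l < n \<longrightarrow> ix l \<noteq> ix (Suc l)) \<and>
        (\<forall>l \<in> {1..n}. b l \<in> S (ix l) \<and> \<psi> (b l) = 0) \<longrightarrow>
          \<psi> (prod_list (map b [1..<Suc n])) = 0 \<and>
          \<psi>' (prod_list (map b [1..<Suc n])) =
            (if odd n \<and> (\<forall>l \<in> {1..n}. ix l = ix (Suc n - l))
             then (\<Prod>l = 1..(n - 1) div 2. \<psi> (b l * b (Suc n - l))) * \<psi>' (b ((n + 1) div 2))
             else 0))"

text \<open>A distribution (linear functional on C[x]) is represented by its moment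
sequence mu n = mu(x^n). Formal series in z with finitely many positive and
possibly infinitely many negative powers of z are represented as formal Laurent
series in the variable w = 1/z (type complex fls).\<close>

definition Gser :: "(nat \<Rightarrow> complex) \<Rightarrow> complex fls" where
  "Gser \<mu> = fps_to_fls (fps_X * Abs_fps \<mu>)"   (* sum_n mu(x^n) z^(-n-1) *)

definition Fser :: "(nat \<Rightarrow> complex) \<Rightarrow> complex fls" where
  "Fser \<mu> = inverse (Gser \<mu>)"

text \<open>Formal derivative with respect to z: d/dz = - w^2 d/dw.\<close>
definition zderiv :: "complex fls \<Rightarrow> complex fls" where
  "zderiv F = - (fls_X ^ 2 * fls_deriv F)"

text \<open>Substitution z := F(z) into a series g in z, where F = z + (lower order):
in the variable w this is substituting w := 1/F(z), a power series in w
without constant term.\<close>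
definition subst_z :: "complex fls \<Rightarrow> complex fls \<Rightarrow> complex fls" where
  "subst_z g F = fls_compose_fps g (fls_regpart (inverse F))"

end

theory Submission
  imports Defs
begin

(* Expanding (a + f)^n in B, the F-component is the sum of the words a^k0 f a^k1 f ... f a^km
   with m >= 1, and cyclic-antimonotone independence gives each word the value
   mu(k0 + km) mu(k1) ... mu(k(m-1)) nu(m).  In the free model, with b2 of distribution delta_0,
   (b1 + b2)^n - b1^n is the sum of the corresponding words b1^k0 b2 b1^k1 ... b2 b1^km, and
   infinitesimal freeness assigns psi' the same value to each of them: centring the inner powers
   of b1 leaves only alternating products that vanish unless all inner factors were replaced by
   their moments.  Summing over words, in the variable w = 1/z the series sum_n nu~(n) w^n equals
   w G'(w) N(G(w)) with G(w) = G_mu(1/w) and N(w) = G_nu(1/w) / w^2, which is the stated identity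
   since F_mu = 1/G_mu. *)

lemma is_calg_scale_zero: "is_calg sc \<Longrightarrow> sc 0 x = 0"
proof -
  assume "is_calg sc"
  then have "sc (0 + 0) x = sc 0 x + sc 0 x" unfolding is_calg_def by blast
  then show ?thesis by simp
qed

lemma is_calg_scale_minus: "is_calg sc \<Longrightarrow> sc (- c) x = - sc c x"
proof -
  assume sc: "is_calg sc"
  then have "sc c x + sc (- c) x = sc (c + - c) x" unfolding is_calg_def by metis
  then show ?thesis using is_calg_scale_zero[OF sc] by (simp add: eq_neg_iff_add_eq_0 add.commute)
qed

lemma is_calg_scale_mult_left: "is_calg sc \<Longrightarrow> sc c x * y = sc c (x * y)"
  unfolding is_calg_def by metis

lemma is_calg_scale_mult_right: "is_calg sc \<Longrightarrow> x * sc c y = sc c (x * y)"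
  unfolding is_calg_def by metis

lemma clinear_fun_add: "clinear_fun sc \<omega> \<Longrightarrow> \<omega> (x + y) = \<omega> x + \<omega> y"
  unfolding clinear_fun_def by blast

lemma clinear_fun_scale: "clinear_fun sc \<omega> \<Longrightarrow> \<omega> (sc c x) = c * \<omega> x"
  unfolding clinear_fun_def by blast

lemma clinear_fun_zero: "clinear_fun sc \<omega> \<Longrightarrow> \<omega> 0 = 0"
  using clinear_fun_add[of sc \<omega> 0 0] by simp

lemma clinear_fun_diff: "clinear_fun sc \<omega> \<Longrightarrow> \<omega> (x - y) = \<omega> x - \<omega> y"
  using clinear_fun_add[of sc \<omega> "x - y" y] by simp

lemma clinear_fun_sum: "clinear_fun sc \<omega> \<Longrightarrow> \<omega> (sum g A) = (\<Sum>x\<in>A. \<omega> (g x))"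
  by (induction A rule: infinite_finite_induct) (auto simp: clinear_fun_zero clinear_fun_add)

lemma power_in_ualg_gen: "b ^ n \<in> ualg_gen sc b"
  by (induction n) (auto intro: ualg_gen.intros)

lemma prod_list_map_conv_prod_lessThan: "prod_list (map g xs) = (\<Prod>i<length xs. g (xs ! i))"
  by (induction xs) (simp_all add: prod.lessThan_Suc_shift del: prod.lessThan_Suc)

(* The word [k0, k1, ..., km] stands for the monomial a^k0 f a^k1 f ... f a^km, of degree n when
   sum ks + m = n; multiplying it on the right by a gives inc_last ks, by f gives ks @ [0]. *)
definition moment_words :: "nat \<Rightarrow> nat list set" where
  "moment_words n = {ks. 2 \<le> length ks \<and> sum_list ks + length ks = Suc n}"

definition inc_last :: "nat list \<Rightarrow> nat list" where
  "inc_last ks = butlast ks @ [Suc (last ks)]"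

lemma length_inc_last: "ks \<noteq> [] \<Longrightarrow> length (inc_last ks) = length ks"
  by (cases ks rule: rev_cases) (auto simp: inc_last_def)

lemma sum_list_inc_last: "ks \<noteq> [] \<Longrightarrow> sum_list (inc_last ks) = Suc (sum_list ks)"
  by (cases ks rule: rev_cases) (auto simp: inc_last_def)

lemma inc_last_neq_append_0: "inc_last ks \<noteq> ks' @ [0]"
  by (simp add: inc_last_def)

lemma inc_last_neq_pair_0: "inc_last ks \<noteq> [n, 0]"
  using inc_last_neq_append_0[of ks "[n]"] by simp

lemma inj_on_inc_last: "inj_on inc_last {ks. ks \<noteq> []}"
proof (rule inj_onI)
  fix ks ks' assume "ks \<in> {ks. ks \<noteq> []}" "ks' \<in> {ks. ks \<noteq> []}" "inc_last ks = inc_last ks'"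
  then have "butlast ks = butlast ks'" "last ks = last ks'" "ks \<noteq> []" "ks' \<noteq> []"
    unfolding inc_last_def by auto
  then show "ks = ks'" by (metis append_butlast_last_id)
qed

lemma finite_moment_words: "finite (moment_words n)"
proof (rule finite_subset)
  show "moment_words n \<subseteq> {ks. set ks \<subseteq> {..n} \<and> length ks \<le> Suc n}"
    unfolding moment_words_def
    by (auto dest!: member_le_sum_list simp: subset_iff)
  show "finite {ks. set ks \<subseteq> {..n} \<and> length ks \<le> Suc n}"
    by (rule finite_lists_length_le) auto
qed

lemma moment_words_0: "moment_words 0 = {}"
  unfolding moment_words_def by auto

lemma moment_words_Suc:
  "moment_words (Suc n) = inc_last ` moment_words n \<union> (\<lambda>ks. ks @ [0]) ` moment_words n \<union> {[n, 0]}"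
proof (intro equalityI subsetI)
  fix ks assume "ks \<in> moment_words (Suc n)"
  then have len: "2 \<le> length ks" and sum: "sum_list ks + length ks = Suc (Suc n)"
    unfolding moment_words_def by auto
  obtain ks' k where ks: "ks = ks' @ [k]" using len by (cases ks rule: rev_cases) auto
  show "ks \<in> inc_last ` moment_words n \<union> (\<lambda>ks. ks @ [0]) ` moment_words n \<union> {[n, 0]}"
  proof (cases k)
    case 0
    show ?thesis
    proof (cases "length ks = 2")
      case True
      then have "ks' = [n]" using ks sum 0 by (cases ks') auto
      then show ?thesis using ks 0 by simp
    next
      case False
      then have "ks' \<in> moment_words n" using len sum ks 0 unfolding moment_words_def by auto
      then show ?thesis using ks 0 by blast
    qed
  next
    case (Suc k')
    then have "ks' @ [k'] \<in> moment_words n" using len sum ks unfolding moment_words_def by auto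
    moreover have "ks = inc_last (ks' @ [k'])" using ks Suc by (simp add: inc_last_def)
    ultimately show ?thesis by blast
  qed
next
  fix ks assume "ks \<in> inc_last ` moment_words n \<union> (\<lambda>ks. ks @ [0]) ` moment_words n \<union> {[n, 0]}"
  moreover have "inc_last ks \<in> moment_words (Suc n)" if "ks \<in> moment_words n" for ks
  proof -
    have "ks \<noteq> []" using that unfolding moment_words_def by auto
    then show ?thesis using that sum_list_inc_last length_inc_last unfolding moment_words_def by simp
  qed
  ultimately show "ks \<in> moment_words (Suc n)"
    unfolding moment_words_def by auto
qed

lemma sum_moment_words_Suc:
  "sum W (moment_words (Suc n)) =
     (\<Sum>ks\<in>moment_words n. W (inc_last ks)) + (\<Sum>ks\<in>moment_words n. W (ks @ [0])) + W [n, 0]"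
proof -
  have nonempty: "moment_words n \<subseteq> {ks. ks \<noteq> []}" unfolding moment_words_def by auto
  have inj: "inj_on inc_last (moment_words n)" "inj_on (\<lambda>ks. ks @ [0]) (moment_words n)"
    using inj_on_subset[OF inj_on_inc_last nonempty] by (auto intro: inj_onI)
  have "inc_last ` moment_words n \<inter> (\<lambda>ks. ks @ [0]) ` moment_words n = {}"
    by (auto simp: inc_last_neq_append_0)
  then have "sum W (inc_last ` moment_words n \<union> (\<lambda>ks. ks @ [0]) ` moment_words n) =
      (\<Sum>ks\<in>moment_words n. W (inc_last ks)) + (\<Sum>ks\<in>moment_words n. W (ks @ [0]))"
    by (simp add: sum.union_disjoint finite_moment_words sum.reindex inj)
  moreover have "[n, 0] \<notin> inc_last ` moment_words n \<union> (\<lambda>ks. ks @ [0]) ` moment_words n"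
    using inc_last_neq_pair_0[symmetric] by (auto simp: moment_words_def)
  ultimately show ?thesis
    unfolding moment_words_Suc by (simp add: finite_moment_words add.commute)
qed

lemma eq_sum_moment_wordsI:
  fixes e :: "nat \<Rightarrow> 'x::ab_group_add" and W :: "nat list \<Rightarrow> 'x"
  assumes "e 0 = 0"
    and e_Suc: "\<And>n. e (Suc n) = W [n, 0] + P (e n) + Q (e n)"
    and W_inc_last: "\<And>ks. 2 \<le> length ks \<Longrightarrow> W (inc_last ks) = P (W ks)"
    and W_append_0: "\<And>ks. 2 \<le> length ks \<Longrightarrow> W (ks @ [0]) = Q (W ks)"
    and "additive P" "additive Q"
  shows "e n = sum W (moment_words n)"
proof (induction n)
  case 0
  then show ?case using \<open>e 0 = 0\<close> by (simp add: moment_words_0)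
next
  case (Suc n)
  have "(\<Sum>ks\<in>moment_words n. W (inc_last ks)) = P (e n)"
    using Suc by (simp add: additive.sum[OF \<open>additive P\<close>] W_inc_last moment_words_def)
  moreover have "(\<Sum>ks\<in>moment_words n. W (ks @ [0])) = Q (e n)"
    using Suc by (simp add: additive.sum[OF \<open>additive Q\<close>] W_append_0 moment_words_def)
  ultimately show ?case by (simp add: sum_moment_words_Suc e_Suc algebra_simps)
qed

definition word_moment :: "(nat \<Rightarrow> complex) \<Rightarrow> (nat \<Rightarrow> complex) \<Rightarrow> nat list \<Rightarrow> complex" where
  "word_moment \<mu> \<nu> ks = \<mu> (hd ks + last ks) * prod_list (map \<mu> (butlast (tl ks))) * \<nu> (length ks - 1)"

lemma fst_bpow: "fst (bpow lm rm x n) = fst x ^ n"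
  by (induction n) (auto simp: bmul_def power_commutes)

lemma snd_bpow_Suc:
  "snd (bpow lm rm x (Suc n)) =
     lm (fst x ^ n) (snd x) + rm (snd (bpow lm rm x n)) (fst x) + snd (bpow lm rm x n) * snd x"
  by (simp add: bmul_def fst_bpow)

lemma alt_word_cong:
  "(\<And>i. i \<le> m \<Longrightarrow> A i = A' i) \<Longrightarrow> alt_word lm rm A F m = alt_word lm rm A' F m"
  by (induction lm rm A F m rule: alt_word.induct) auto

locale cyc_antimono_pair =
  fixes sa :: "complex \<Rightarrow> 'a::ring_1 \<Rightarrow> 'a" and \<phi> :: "'a \<Rightarrow> complex"
    and sf :: "complex \<Rightarrow> 'f::ring \<Rightarrow> 'f" and lm :: "'a \<Rightarrow> 'f \<Rightarrow> 'f"
    and rm :: "'f \<Rightarrow> 'a \<Rightarrow> 'f" and \<Phi> :: "'f \<Rightarrow> complex"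
    and a :: 'a and f :: 'f
  assumes ncps: "ncps_typeB' sa \<phi> sf lm rm \<Phi>"
    and indep: "cyc_antimono_indep lm rm \<phi> \<Phi> (ualg_gen sa a) (alg_gen sf f)"
begin

lemma bimodule: "is_compat_bimodule sa sf lm rm"
  and Phi_linear: "clinear_fun sf \<Phi>"
  using ncps unfolding ncps_typeB'_def by auto

lemma lm_one: "lm 1 x = x"
  and rm_one: "rm x 1 = x"
  and rm_mult: "rm x (b * c) = rm (rm x b) c"
  and rm_add_left: "rm (x + y) b = rm x b + rm y b"
  and lm_zero: "lm 0 x = 0"
  and rm_zero: "rm x 0 = 0"
proof -
  show "lm 1 x = x" "rm x 1 = x" "rm x (b * c) = rm (rm x b) c" "rm (x + y) b = rm x b + rm y b"
    using bimodule unfolding is_compat_bimodule_def by auto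
  have "\<forall>b c x. lm (b + c) x = lm b x + lm c x" "\<forall>b c x. rm x (b + c) = rm x b + rm x c"
    using bimodule unfolding is_compat_bimodule_def by auto
  then have "lm 0 x = lm 0 x + lm 0 x" "rm x 0 = rm x 0 + rm x 0"
    by (metis add.right_neutral)+
  then show "lm 0 x = 0" "rm x 0 = 0" by simp_all
qed

lemma snd_bpow_Suc_zero_left: "snd (bpow lm rm (0, f) (Suc n)) = fprod (\<lambda>_. f) (Suc n)"
proof (induction n)
  case 0
  then show ?case by (simp add: bmul_def lm_one rm_zero)
next
  case (Suc n)
  then show ?case using snd_bpow_Suc[of lm rm "(0, f)" "Suc n"] by (simp add: lm_zero rm_zero)
qed

lemma alt_word_rm_last:
  assumes "1 \<le> m"
  shows "alt_word lm rm (\<lambda>i. if i = m then A m * c else A i) F m = rm (alt_word lm rm A F m) c"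
proof -
  obtain k where m: "m = Suc k" using assms by (cases m) auto
  show ?thesis
  proof (cases k)
    case 0
    then show ?thesis using m by (simp add: rm_mult)
  next
    case (Suc j)
    have "alt_word lm rm (\<lambda>i. if i = m then A m * c else A i) F (Suc j) = alt_word lm rm A F (Suc j)"
      by (rule alt_word_cong) (use m Suc in auto)
    then show ?thesis using m Suc by (simp add: rm_mult)
  qed
qed

definition af_word :: "nat list \<Rightarrow> 'f" where
  "af_word ks = alt_word lm rm (\<lambda>i. a ^ (ks ! i)) (\<lambda>_. f) (length ks - 1)"

lemma af_word_inc_last:
  assumes "2 \<le> length ks"
  shows "af_word (inc_last ks) = rm (af_word ks) a"
proof -
  define m where "m = length ks - 1"
  have "ks \<noteq> []" "1 \<le> m" using assms by (auto simp: m_def)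
  have "af_word (inc_last ks) = alt_word lm rm (\<lambda>i. if i = m then a ^ (ks ! m) * a else a ^ (ks ! i)) (\<lambda>_. f) m"
    unfolding af_word_def length_inc_last[OF \<open>ks \<noteq> []\<close>] m_def[symmetric]
  proof (rule alt_word_cong)
    fix i assume "i \<le> m"
    then show "a ^ (inc_last ks ! i) = (if i = m then a ^ (ks ! m) * a else a ^ (ks ! i))"
      using \<open>ks \<noteq> []\<close>
      by (auto simp: inc_last_def nth_append nth_butlast last_conv_nth power_commutes m_def)
  qed
  also have "\<dots> = rm (af_word ks) a"
    using alt_word_rm_last[OF \<open>1 \<le> m\<close>] unfolding af_word_def m_def by simp
  finally show ?thesis .
qed

lemma af_word_append_0:
  assumes "2 \<le> length ks"
  shows "af_word (ks @ [0]) = af_word ks * f"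
proof -
  define j where "j = length ks - 2"
  have j: "length ks - 1 = Suc j" using assms by (simp add: j_def)
  have "alt_word lm rm (\<lambda>i. a ^ ((ks @ [0]) ! i)) (\<lambda>_. f) (Suc j) = alt_word lm rm (\<lambda>i. a ^ (ks ! i)) (\<lambda>_. f) (Suc j)"
    by (rule alt_word_cong) (use j in \<open>auto simp: nth_append\<close>)
  moreover have "length (ks @ [0]) - 1 = Suc (Suc j)" "(ks @ [0]) ! Suc (Suc j) = 0"
    using j by (simp_all add: nth_append)
  ultimately show ?thesis
    unfolding af_word_def using j by (simp add: rm_one)
qed

lemma snd_bpow_eq_sum_af_word: "snd (bpow lm rm (a, f) n) = sum af_word (moment_words n)"
proof (rule eq_sum_moment_wordsI[where P = "\<lambda>x. rm x a" and Q = "\<lambda>x. x * f"])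
  show "snd (bpow lm rm (a, f) (Suc n)) = af_word [n, 0] + rm (snd (bpow lm rm (a, f) n)) a + snd (bpow lm rm (a, f) n) * f" for n
    using snd_bpow_Suc[of lm rm "(a, f)" n] by (simp add: af_word_def rm_one)
qed (auto simp: af_word_inc_last af_word_append_0 rm_add_left algebra_simps intro: additive.intro)

lemma Phi_af_word:
  assumes "2 \<le> length ks"
  shows "\<Phi> (af_word ks) = word_moment (\<lambda>n. \<phi> (a ^ n)) (\<lambda>n. \<Phi> (snd (bpow lm rm (0, f) n))) ks"
proof -
  define m where "m = length ks - 1"
  have "ks \<noteq> []" "1 \<le> m" using assms by (auto simp: m_def)
  have "\<Phi> (alt_word lm rm (\<lambda>i. a ^ (ks ! i)) (\<lambda>_. f) m) =
      \<phi> (a ^ (ks ! 0) * a ^ (ks ! m)) * (\<Prod>i = 1..m - 1. \<phi> (a ^ (ks ! i))) * \<Phi> (fprod (\<lambda>_. f) m)"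
    using indep[unfolded cyc_antimono_indep_def, rule_format, of m "\<lambda>i. a ^ (ks ! i)" "\<lambda>_. f"]
      \<open>1 \<le> m\<close> power_in_ualg_gen alg_gen.gen by blast
  moreover have "\<phi> (a ^ (ks ! 0) * a ^ (ks ! m)) = \<phi> (a ^ (hd ks + last ks))"
    using \<open>ks \<noteq> []\<close> by (simp add: m_def power_add hd_conv_nth last_conv_nth)
  moreover have "(\<Prod>i = 1..m - 1. \<phi> (a ^ (ks ! i))) = prod_list (map (\<lambda>n. \<phi> (a ^ n)) (butlast (tl ks)))"
  proof -
    have "(\<Prod>i = 1..m - 1. \<phi> (a ^ (ks ! i))) = (\<Prod>i<m - 1. \<phi> (a ^ (ks ! Suc i)))"
      using prod.atLeast1_atMost_eq[of "\<lambda>i. \<phi> (a ^ (ks ! i))" "m - 1"] by simp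
    then show ?thesis
      unfolding prod_list_map_conv_prod_lessThan by (simp add: m_def nth_butlast nth_tl)
  qed
  moreover have "fprod (\<lambda>_. f) m = snd (bpow lm rm (0, f) m)"
    using snd_bpow_Suc_zero_left[of "m - 1"] \<open>1 \<le> m\<close> by simp
  ultimately show ?thesis
    unfolding af_word_def word_moment_def m_def by simp
qed

lemma Phi_snd_bpow:
  "\<Phi> (snd (bpow lm rm (a, f) n)) =
     (\<Sum>ks\<in>moment_words n. word_moment (\<lambda>n. \<phi> (a ^ n)) (\<lambda>n. \<Phi> (snd (bpow lm rm (0, f) n))) ks)"
  unfolding snd_bpow_eq_sum_af_word clinear_fun_sum[OF Phi_linear]
  by (rule sum.cong) (auto simp: Phi_af_word moment_words_def)

end

lemma successively_neq_bool_nth: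
  fixes bs :: "bool list"
  assumes "successively (\<noteq>) bs" "i < length bs"
  shows "bs ! i = (bs ! 0 \<longleftrightarrow> even i)"
  using assms(2)
proof (induction i)
  case (Suc i)
  then show ?case using successively_nth[OF assms(1), of i] by auto
qed simp

locale inf_free_pair =
  fixes sc :: "complex \<Rightarrow> 'c::ring_1 \<Rightarrow> 'c" and \<psi> \<psi>' :: "'c \<Rightarrow> complex" and b1 b2 :: 'c
    and \<mu> \<nu> :: "nat \<Rightarrow> complex"
  assumes inf_ncps: "inf_ncps sc \<psi> \<psi>'"
    and inf_free: "inf_free \<psi> \<psi>' (\<lambda>i::bool. if i then ualg_gen sc b1 else ualg_gen sc b2)"
    and b1_moments: "\<And>n. \<psi> (b1 ^ n) = \<mu> n" "\<And>n. \<psi>' (b1 ^ n) = 0"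
    and b2_moments: "\<And>n. \<psi> (b2 ^ n) = (if n = 0 then 1 else 0)" "\<And>n. \<psi>' (b2 ^ n) = \<nu> n"
begin

abbreviation subalg :: "bool \<Rightarrow> 'c set" where
  "subalg i \<equiv> if i then ualg_gen sc b1 else ualg_gen sc b2"

lemma calg: "is_calg sc"
  and psi_linear: "clinear_fun sc \<psi>" and psi'_linear: "clinear_fun sc \<psi>'"
  and psi_one: "\<psi> 1 = 1"
  using inf_ncps unfolding inf_ncps_def by auto

definition centre :: "'c \<Rightarrow> 'c" where
  "centre x = x - sc (\<psi> x) 1"

lemma psi_centre: "\<psi> (centre x) = 0"
  unfolding centre_def
  by (simp add: clinear_fun_diff[OF psi_linear] clinear_fun_scale[OF psi_linear] psi_one)

lemma centre_in_ualg_gen: "x \<in> ualg_gen sc g \<Longrightarrow> centre x \<in> ualg_gen sc g"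
  unfolding centre_def diff_conv_add_uminus is_calg_scale_minus[OF calg, symmetric]
  by (auto intro: ualg_gen.intros)

lemma linear_split_centre:
  assumes "clinear_fun sc \<omega>"
  shows "\<omega> (u * (x * v)) = \<omega> (u * (centre x * v)) + \<psi> x * \<omega> (u * v)"
proof -
  have "u * (x * v) = u * (centre x * v) + sc (\<psi> x) (u * v)"
    unfolding centre_def
    by (simp add: algebra_simps is_calg_scale_mult_left[OF calg] is_calg_scale_mult_right[OF calg])
  then show ?thesis
    by (simp add: clinear_fun_add[OF assms] clinear_fun_scale[OF assms])
qed

lemma psi'_alternating_prod:
  assumes "xs \<noteq> []" and alternating: "successively (\<noteq>) (map fst xs)"
    and centred: "\<forall>p\<in>set xs. snd p \<in> subalg (fst p) \<and> \<psi> (snd p) = 0"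
  shows "\<psi>' (prod_list (map snd xs)) =
    (if odd (length xs)
     then (\<Prod>l = 1..(length xs - 1) div 2. \<psi> (snd (xs ! (l - 1)) * snd (xs ! (length xs - l))))
            * \<psi>' (snd (xs ! (length xs div 2)))
     else 0)"
proof -
  define n where "n = length xs"
  define ix where "ix l = fst (xs ! (l - 1))" for l
  define b where "b l = snd (xs ! (l - 1))" for l
  have "1 \<le> n" using \<open>xs \<noteq> []\<close> by (simp add: n_def Suc_leI)
  have "ix l \<noteq> ix (Suc l)" if "1 \<le> l" "l < n" for l
    using successively_nth[OF alternating, of "l - 1"] that by (simp add: ix_def n_def)
  moreover have "b l \<in> subalg (ix l) \<and> \<psi> (b l) = 0" if "l \<in> {1..n}" for l
  proof -
    have "xs ! (l - 1) \<in> set xs" using that by (auto simp: n_def intro!: nth_mem)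
    then show ?thesis using centred unfolding b_def ix_def by blast
  qed
  ultimately have free: "\<psi>' (prod_list (map b [1..<Suc n])) =
      (if odd n \<and> (\<forall>l \<in> {1..n}. ix l = ix (Suc n - l))
       then (\<Prod>l = 1..(n - 1) div 2. \<psi> (b l * b (Suc n - l))) * \<psi>' (b ((n + 1) div 2))
       else 0)"
    using inf_free \<open>1 \<le> n\<close> unfolding inf_free_def by blast
  have "map b [1..<Suc n] = map snd xs"
    by (rule nth_equalityI) (auto simp: n_def b_def nth_upt simp del: upt_Suc)
  moreover have "ix l = ix (Suc n - l)" if "odd n" "l \<in> {1..n}" for l
    using that successively_neq_bool_nth[OF alternating, of "l - 1"]
      successively_neq_bool_nth[OF alternating, of "n - l"]
    by (auto simp: ix_def n_def)
  moreover have "(n + 1) div 2 - 1 = n div 2" if "odd n"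
    using that by (auto elim: oddE)
  ultimately show ?thesis
    using free unfolding n_def[symmetric] by (auto simp: b_def intro!: prod.cong)
qed

lemma psi'_alternating_prod_even:
  assumes "xs \<noteq> []" "successively (\<noteq>) (map fst xs)"
    "\<forall>p\<in>set xs. snd p \<in> subalg (fst p) \<and> \<psi> (snd p) = 0" "even (length xs)"
  shows "\<psi>' (prod_list (map snd xs)) = 0"
  using psi'_alternating_prod[OF assms(1-3)] assms(4) by simp

lemma psi'_alternating_prod_vanish:
  assumes "xs \<noteq> []" "successively (\<noteq>) (map fst xs)"
    "\<forall>p\<in>set xs. snd p \<in> subalg (fst p) \<and> \<psi> (snd p) = 0"
    and "1 \<le> l" "l \<le> (length xs - 1) div 2" "\<psi> (snd (xs ! (l - 1)) * snd (xs ! (length xs - l))) = 0"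
  shows "\<psi>' (prod_list (map snd xs)) = 0"
proof -
  have "(\<Prod>l = 1..(length xs - 1) div 2. \<psi> (snd (xs ! (l - 1)) * snd (xs ! (length xs - l)))) = 0"
    by (rule prod_zero) (use assms(4-6) in auto)
  then show ?thesis using psi'_alternating_prod[OF assms(1-3)] by simp
qed

definition bword :: "(nat \<times> 'c) list \<Rightarrow> 'c" where
  "bword bs = prod_list (map (\<lambda>(l, y). b2 ^ l * y) bs)"

definition bword_factors :: "(nat \<times> 'c) list \<Rightarrow> (bool \<times> 'c) list" where
  "bword_factors bs = concat (map (\<lambda>(l, y). [(False, b2 ^ l), (True, y)]) bs)"

definition admissible_blocks :: "(nat \<times> 'c) list \<Rightarrow> bool" where
  "admissible_blocks bs \<longleftrightarrow> (\<forall>(l, y)\<in>set bs. 1 \<le> l \<and> y \<in> ualg_gen sc b1)"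

definition centred_blocks :: "(nat \<times> 'c) list \<Rightarrow> bool" where
  "centred_blocks bs \<longleftrightarrow> admissible_blocks bs \<and> (\<forall>(l, y)\<in>set bs. \<psi> y = 0)"

lemma bword_simps [simp]:
  "bword [] = 1" "bword ((l, y) # bs) = b2 ^ l * (y * bword bs)" "bword (bs @ bs') = bword bs * bword bs'"
  by (auto simp: bword_def mult.assoc)

lemma bword_factors_simps [simp]:
  "bword_factors [] = []"
  "bword_factors ((l, y) # bs) = (False, b2 ^ l) # (True, y) # bword_factors bs"
  by (auto simp: bword_factors_def)

lemma length_bword_factors [simp]: "length (bword_factors bs) = 2 * length bs"
  by (induction bs) auto

lemma prod_bword_factors [simp]: "prod_list (map snd (bword_factors bs)) = bword bs"
  by (induction bs) (auto simp: mult.assoc)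

lemma successively_bword_factors:
  "successively (\<noteq>) (False # ts) \<Longrightarrow>
     successively (\<noteq>) (map fst (bword_factors bs) @ False # ts) \<and>
     successively (\<noteq>) (True # map fst (bword_factors bs) @ False # ts)"
  by (induction bs) auto

lemma b2_power_centred: "1 \<le> l \<Longrightarrow> \<psi> (b2 ^ l) = 0"
  using b2_moments by simp

lemma bword_factors_centred:
  assumes "centred_blocks bs"
  shows "\<forall>p\<in>set (bword_factors bs). snd p \<in> subalg (fst p) \<and> \<psi> (snd p) = 0"
  using assms
  by (induction bs) (fastforce simp: centred_blocks_def admissible_blocks_def b2_power_centred power_in_ualg_gen)+

(* The four alternating words obtained from x (bword zs) b2^l y by centring x and y: those of even
   length vanish, and in the others the outermost b2-factors are paired, with psi (b2^l1 b2^l) = 0. *)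
lemma psi'_bword_factors_vanish:
  assumes zs: "zs \<noteq> []" "centred_blocks zs" and "1 \<le> l"
    and pre: "pre = [] \<or> pre = [(True, c)]" and post: "post = [] \<or> post = [(True, d)]"
    and c: "c \<in> ualg_gen sc b1" "\<psi> c = 0" and d: "d \<in> ualg_gen sc b1" "\<psi> d = 0"
  shows "\<psi>' (prod_list (map snd (pre @ bword_factors zs @ (False, b2 ^ l) # post))) = 0"
proof -
  define xs where "xs = pre @ bword_factors zs @ (False, b2 ^ l) # post"
  obtain l1 z1 zs' where zs_Cons: "zs = (l1, z1) # zs'" using zs by (cases zs) auto
  have "1 \<le> l1" using zs unfolding zs_Cons centred_blocks_def admissible_blocks_def by simp
  have "successively (\<noteq>) (False # map fst post)" using post by auto
  then have alternating: "successively (\<noteq>) (map fst xs)"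
    using successively_bword_factors pre unfolding xs_def by fastforce
  have centred: "\<forall>p\<in>set xs. snd p \<in> subalg (fst p) \<and> \<psi> (snd p) = 0"
    using bword_factors_centred[OF zs(2)] pre post c d \<open>1 \<le> l\<close> b2_power_centred
    unfolding xs_def by (auto simp: power_in_ualg_gen)
  show ?thesis
  proof (cases "length pre = length post")
    case True
    have "xs ! length pre = (False, b2 ^ l1)" "xs ! (length xs - Suc (length pre)) = (False, b2 ^ l)"
      using True pre post unfolding xs_def zs_Cons by (auto simp: nth_append)
    moreover have "\<psi> (b2 ^ l1 * b2 ^ l) = 0"
      using \<open>1 \<le> l1\<close> b2_moments by (simp add: power_add[symmetric])
    ultimately show ?thesis
      using psi'_alternating_prod_vanish[OF _ alternating centred, of "Suc (length pre)"] True zs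
      unfolding xs_def by (simp add: zs_Cons)
  next
    case False
    then have "even (length xs)" using pre post unfolding xs_def by auto
    then show ?thesis
      using psi'_alternating_prod_even[OF _ alternating centred] unfolding xs_def by simp
  qed
qed

lemma psi'_bword_centred:
  assumes "zs \<noteq> []" "centred_blocks zs" "1 \<le> l" "x \<in> ualg_gen sc b1" "y \<in> ualg_gen sc b1"
  shows "\<psi>' (x * (bword zs * (b2 ^ l * y))) = 0"
proof -
  have vanish: "\<psi>' (prod_list (map snd (pre @ bword_factors zs @ (False, b2 ^ l) # post))) = 0"
    if "pre = [] \<or> pre = [(True, centre x)]" "post = [] \<or> post = [(True, centre y)]" for pre post
    using psi'_bword_factors_vanish[OF assms(1-3) that] assms(4,5) centre_in_ualg_gen psi_centre
    by blast
  have "\<psi>' (1 * (x * (bword zs * b2 ^ l * (y * 1)))) = \<psi> x * \<psi> y * \<psi>' (bword zs * b2 ^ l)"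
    using linear_split_centre[OF psi'_linear, of 1 x "bword zs * b2 ^ l * (y * 1)"]
      linear_split_centre[OF psi'_linear, of "centre x * (bword zs * b2 ^ l)" y 1]
      linear_split_centre[OF psi'_linear, of "bword zs * b2 ^ l" y 1]
      vanish[of "[]" "[]"] vanish[of "[(True, centre x)]" "[]"] vanish[of "[]" "[(True, centre y)]"]
      vanish[of "[(True, centre x)]" "[(True, centre y)]"]
    by (simp add: mult.assoc)
  then show ?thesis
    using vanish[of "[]" "[]"] by (simp add: mult.assoc)
qed

lemma psi'_b2_power_between:
  assumes "1 \<le> l" "x \<in> ualg_gen sc b1" "y \<in> ualg_gen sc b1"
  shows "\<psi>' (x * (b2 ^ l * y)) = \<psi> (x * y) * \<nu> l"
proof -
  have centred: "centre x \<in> subalg True" "\<psi> (centre x) = 0" "centre y \<in> subalg True" "\<psi> (centre y) = 0"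
    "b2 ^ l \<in> subalg False" "\<psi> (b2 ^ l) = 0"
    using assms centre_in_ualg_gen psi_centre b2_power_centred by (auto simp: power_in_ualg_gen)
  have "\<psi>' (centre x * (b2 ^ l * centre y)) = \<psi> (centre x * centre y) * \<nu> l"
    using psi'_alternating_prod[of "[(True, centre x), (False, b2 ^ l), (True, centre y)]"] centred b2_moments
    by simp
  moreover have "\<psi>' (centre x * b2 ^ l) = 0"
    using psi'_alternating_prod_even[of "[(True, centre x), (False, b2 ^ l)]"] centred by simp
  moreover have "\<psi>' (b2 ^ l * centre y) = 0"
    using psi'_alternating_prod_even[of "[(False, b2 ^ l), (True, centre y)]"] centred by simp
  ultimately show ?thesis
    using linear_split_centre[OF psi'_linear, of 1 x "b2 ^ l * (y * 1)"]
      linear_split_centre[OF psi'_linear, of "centre x * b2 ^ l" y 1]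
      linear_split_centre[OF psi'_linear, of "b2 ^ l" y 1]
      linear_split_centre[OF psi_linear, of 1 x "y * 1"]
      linear_split_centre[OF psi_linear, of "centre x" y 1]
      centred b2_moments
    by (simp add: mult.assoc algebra_simps)
qed

(* Centring the first b1-factor either creates a centred block, whose word vanishes, or merges the
   two neighbouring powers of b2. *)
lemma psi'_bword:
  assumes "centred_blocks zs" "bs \<noteq> []" "admissible_blocks bs" "x \<in> ualg_gen sc b1"
  shows "\<psi>' (x * (bword zs * bword bs)) =
    (if zs = [] then \<psi> (x * snd (last bs)) * (\<Prod>(l, y)\<leftarrow>butlast bs. \<psi> y) * \<nu> (\<Sum>(l, y)\<leftarrow>bs. l)
     else 0)"
  using assms
proof (induction "length bs" arbitrary: zs bs rule: less_induct)
  case less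
  obtain l y bs' where bs: "bs = (l, y) # bs'" using less.prems by (cases bs) auto
  have "1 \<le> l" "y \<in> ualg_gen sc b1" using less.prems unfolding bs admissible_blocks_def by auto
  show ?case
  proof (cases bs')
    case Nil
    then show ?thesis
      using psi'_b2_power_between[OF \<open>1 \<le> l\<close> less.prems(4) \<open>y \<in> ualg_gen sc b1\<close>]
        psi'_bword_centred[OF _ less.prems(1) \<open>1 \<le> l\<close> less.prems(4) \<open>y \<in> ualg_gen sc b1\<close>]
      by (cases "zs = []") (simp_all add: bs)
  next
    case (Cons p bs'')
    obtain l' y' where p: "p = (l', y')" by (cases p)
    have split: "\<psi>' (x * (bword zs * bword bs)) =
        \<psi>' (x * (bword (zs @ [(l, centre y)]) * bword bs')) + \<psi> y * \<psi>' (x * (bword zs * bword ((l + l', y') # bs'')))"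
      using linear_split_centre[OF psi'_linear, of "x * (bword zs * b2 ^ l)" y "b2 ^ l' * (y' * bword bs'')"]
      by (simp add: bs Cons p mult.assoc power_add)
    have "centred_blocks (zs @ [(l, centre y)])"
      using less.prems(1) \<open>1 \<le> l\<close> centre_in_ualg_gen[OF \<open>y \<in> ualg_gen sc b1\<close>] psi_centre
      unfolding centred_blocks_def admissible_blocks_def by auto
    then have "\<psi>' (x * (bword (zs @ [(l, centre y)]) * bword bs')) = 0"
      using less.hyps[of bs' "zs @ [(l, centre y)]"] less.prems(3,4)
      unfolding bs Cons admissible_blocks_def by auto
    moreover have "\<psi>' (x * (bword zs * bword ((l + l', y') # bs''))) =
        (if zs = [] then \<psi> (x * snd (last bs)) * (\<Prod>(l, y)\<leftarrow>butlast bs'. \<psi> y) * \<nu> (\<Sum>(l, y)\<leftarrow>bs. l) else 0)"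
      using less.hyps[of "(l + l', y') # bs''" zs] less.prems(1,3,4)
      unfolding bs Cons p admissible_blocks_def by (cases bs'') (auto simp: add.assoc)
    ultimately show ?thesis
      using split by (simp add: bs Cons p)
  qed
qed

definition b_word :: "nat list \<Rightarrow> 'c" where
  "b_word ks = b1 ^ hd ks * bword (map (\<lambda>k. (1, b1 ^ k)) (tl ks))"

lemma psi'_b_word:
  assumes "2 \<le> length ks"
  shows "\<psi>' (b_word ks) = word_moment \<mu> \<nu> ks"
proof -
  obtain k0 ks' where ks: "ks = k0 # ks'" "ks' \<noteq> []" using assms by (cases ks) (auto simp: Suc_le_eq)
  have "\<psi>' (b1 ^ k0 * (bword [] * bword (map (\<lambda>k. (1, b1 ^ k)) ks'))) =
      \<psi> (b1 ^ k0 * b1 ^ last ks') * prod_list (map \<mu> (butlast ks')) * \<nu> (length ks')"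
    using psi'_bword[of "[]" "map (\<lambda>k. (1, b1 ^ k)) ks'" "b1 ^ k0"] ks(2)
    by (simp add: centred_blocks_def admissible_blocks_def power_in_ualg_gen last_map
        map_butlast[symmetric] b1_moments sum_list_triv o_def)
  then show ?thesis
    using ks by (simp add: b_word_def word_moment_def power_add[symmetric] b1_moments)
qed

lemma b_power_eq_sum_b_word: "(b1 + b2) ^ n - b1 ^ n = sum b_word (moment_words n)"
proof (rule eq_sum_moment_wordsI[where P = "\<lambda>x. x * b1" and Q = "\<lambda>x. x * b2"])
  show "(b1 + b2) ^ Suc n - b1 ^ Suc n = b_word [n, 0] + ((b1 + b2) ^ n - b1 ^ n) * b1 + ((b1 + b2) ^ n - b1 ^ n) * b2"
    for n
    unfolding b_word_def power_Suc2 by (simp add: algebra_simps del: power_Suc)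
next
  fix ks :: "nat list" assume "2 \<le> length ks"
  then obtain k0 ks'' where "ks = k0 # ks''" "ks'' \<noteq> []" by (cases ks) (auto simp: Suc_le_eq)
  then obtain ks' k where ks: "ks = k0 # ks' @ [k]" by (cases ks'' rule: rev_cases) auto
  show "b_word (inc_last ks) = b_word ks * b1"
    unfolding ks b_word_def inc_last_def by (simp add: mult.assoc power_commutes)
  show "b_word (ks @ [0]) = b_word ks * b2"
    unfolding ks b_word_def by (simp add: mult.assoc)
qed (auto simp: algebra_simps intro: additive.intro)

lemma psi'_power_sum: "\<psi>' ((b1 + b2) ^ n) = (\<Sum>ks\<in>moment_words n. word_moment \<mu> \<nu> ks)"
proof -
  have "\<psi>' ((b1 + b2) ^ n) = \<psi>' (((b1 + b2) ^ n - b1 ^ n) + b1 ^ n)" by simp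
  also have "\<dots> = (\<Sum>ks\<in>moment_words n. \<psi>' (b_word ks))"
    unfolding b_power_eq_sum_b_word clinear_fun_add[OF psi'_linear] clinear_fun_sum[OF psi'_linear]
    by (simp add: b1_moments)
  also have "\<dots> = (\<Sum>ks\<in>moment_words n. word_moment \<mu> \<nu> ks)"
    by (rule sum.cong) (auto simp: psi'_b_word moment_words_def)
  finally show ?thesis .
qed

end

lemma fps_power_nth_Abs_fps:
  fixes \<mu> :: "nat \<Rightarrow> 'a::comm_ring_1"
  shows "(Abs_fps \<mu> ^ p) $ r = (\<Sum>v\<in>natpermute r p. prod_list (map \<mu> v))"
proof (cases "p = 0")
  case True
  then show ?thesis by (simp add: natpermute_0)
next
  case False
  then have "{0..p - 1} = {..<p}" by auto
  then show ?thesis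
    using fps_power_nth[of "Abs_fps \<mu>" p r] False
    by (auto simp: prod_list_map_conv_prod_lessThan natpermute_def intro!: sum.cong)
qed

(* A word of degree n + 1 is k0 # v @ [km] with i = k0 + km, p = length v and sum_list v = n - i - p;
   the i + 1 choices of k0 produce the factor i + 1 of the derivative below. *)
lemma bij_betw_moment_words:
  "bij_betw (\<lambda>(i, p, k0, v). k0 # v @ [i - k0])
     (SIGMA i:{0..n}. SIGMA p:{0..n - i}. SIGMA k0:{0..i}. natpermute (n - i - p) p)
     (moment_words (Suc n))"
proof (rule bij_betwI')
  fix ks assume "ks \<in> moment_words (Suc n)"
  then obtain k0 ks' where ks: "ks = k0 # ks'" "ks' \<noteq> []"
    unfolding moment_words_def by (cases ks) (auto simp: Suc_le_eq)
  then obtain v k where "ks = k0 # v @ [k]" by (cases ks' rule: rev_cases) auto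
  moreover have "k0 + sum_list v + k + length v = n"
    using \<open>ks \<in> moment_words (Suc n)\<close> calculation unfolding moment_words_def by simp
  ultimately show "\<exists>x\<in>SIGMA i:{0..n}. SIGMA p:{0..n - i}. SIGMA k0:{0..i}. natpermute (n - i - p) p.
      ks = (case x of (i, p, k0, v) \<Rightarrow> k0 # v @ [i - k0])"
    by (intro bexI[of _ "(k0 + k, length v, k0, v)"]) (auto simp: natpermute_def)
qed (auto simp: moment_words_def natpermute_def)

lemma fps_deriv_mult_compose_nth:
  fixes \<mu> :: "nat \<Rightarrow> 'a::comm_ring_1"
  shows "(fps_deriv (fps_X * Abs_fps \<mu>) * (N oo (fps_X * Abs_fps \<mu>))) $ n =
    (\<Sum>i = 0..n. \<Sum>p = 0..n - i. of_nat (Suc i) * \<mu> i * N $ p * (\<Sum>v\<in>natpermute (n - i - p) p. prod_list (map \<mu> v)))"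
proof -
  have deriv_nth: "fps_deriv (fps_X * Abs_fps \<mu>) $ i = of_nat (Suc i) * \<mu> i" for i
    unfolding fps_deriv_nth by (simp add: fps_X_mult_nth)
  have compose_nth: "(N oo (fps_X * Abs_fps \<mu>)) $ m =
      (\<Sum>p = 0..m. N $ p * (\<Sum>v\<in>natpermute (m - p) p. prod_list (map \<mu> v)))" for m
    by (auto simp: fps_compose_nth power_mult_distrib fps_X_power_mult_nth fps_power_nth_Abs_fps
        intro!: sum.cong)
  show ?thesis
    unfolding fps_mult_nth deriv_nth compose_nth by (simp add: sum_distrib_left mult_ac)
qed

lemma sum_word_moment_eq_fps_nth:
  "(\<Sum>ks\<in>moment_words n. word_moment \<mu> \<nu> ks) =
     (fps_X * fps_deriv (fps_X * Abs_fps \<mu>) * (Abs_fps (\<lambda>m. \<nu> (Suc m)) oo (fps_X * Abs_fps \<mu>))) $ n"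
proof (cases n)
  case 0
  then show ?thesis by (simp add: moment_words_0)
next
  case (Suc m)
  let ?T = "SIGMA i:{0..m}. SIGMA p:{0..m - i}. SIGMA k0:{0..i}. natpermute (m - i - p) p"
  have "(\<Sum>ks\<in>moment_words (Suc m). word_moment \<mu> \<nu> ks) =
      (\<Sum>(i, p, k0, v)\<in>?T. \<mu> i * prod_list (map \<mu> v) * \<nu> (Suc p))"
    by (subst sum.reindex_bij_betw[OF bij_betw_moment_words, symmetric])
      (auto simp: word_moment_def natpermute_def intro!: sum.cong)
  also have "\<dots> = (\<Sum>i = 0..m. \<Sum>p = 0..m - i. of_nat (Suc i) * \<mu> i * \<nu> (Suc p) *
      (\<Sum>v\<in>natpermute (m - i - p) p. prod_list (map \<mu> v)))"
    by (simp add: sum.Sigma[symmetric] natpermute_finite sum_distrib_left sum_distrib_right mult_ac)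
  also have "\<dots> = (fps_deriv (fps_X * Abs_fps \<mu>) * (Abs_fps (\<lambda>m. \<nu> (Suc m)) oo (fps_X * Abs_fps \<mu>))) $ m"
    unfolding fps_deriv_mult_compose_nth by (simp add: mult_ac)
  also have "\<dots> = (fps_X * fps_deriv (fps_X * Abs_fps \<mu>) * (Abs_fps (\<lambda>m. \<nu> (Suc m)) oo (fps_X * Abs_fps \<mu>))) $ Suc m"
    by (simp only: mult.assoc fps_X_mult_nth) simp
  finally show ?thesis using Suc by simp
qed

lemma Gser_sum_word_moment:
  fixes \<mu> \<nu> :: "nat \<Rightarrow> complex"
  assumes "\<mu> 0 = 1" and "\<nu> 0 = 0"
  shows "Gser (\<lambda>n. \<Sum>ks\<in>moment_words n. word_moment \<mu> \<nu> ks) = subst_z (Gser \<nu>) (Fser \<mu>) * zderiv (Fser \<mu>)"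
proof -
  define G where "G = fps_X * Abs_fps \<mu>"
  define N where "N = Abs_fps (\<lambda>m. \<nu> (Suc m))"
  have "G $ 0 = 0" "G $ 1 = 1"
    using \<open>\<mu> 0 = 1\<close> by (simp_all add: G_def fps_X_mult_nth)
  then have "G \<noteq> 0" by auto
  have nu: "Abs_fps \<nu> = fps_X * N"
    by (rule fps_ext) (simp add: N_def fps_X_mult_nth \<open>\<nu> 0 = 0\<close>)
  have Fser: "Fser \<mu> = inverse (fps_to_fls G)"
    unfolding Fser_def Gser_def G_def ..
  have "subst_z (Gser \<nu>) (Fser \<mu>) = fps_to_fls ((fps_X * (fps_X * N)) oo G)"
    unfolding subst_z_def Gser_def Fser nu using \<open>G $ 0 = 0\<close> \<open>G \<noteq> 0\<close> by simp
  also have "(fps_X * (fps_X * N)) oo G = G * G * (N oo G)"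
    using \<open>G $ 0 = 0\<close> by (simp add: fps_compose_mult_distrib mult.assoc)
  finally have subst: "subst_z (Gser \<nu>) (Fser \<mu>) = fps_to_fls G ^ 2 * fps_to_fls (N oo G)"
    by (simp add: fls_times_fps_to_fls power2_eq_square)
  have deriv: "zderiv (Fser \<mu>) = fls_X ^ 2 * fps_to_fls (fps_deriv G) / fps_to_fls G ^ 2"
    unfolding zderiv_def Fser fls_inverse_deriv' by (simp add: fls_deriv_fps_to_fls)
  have "Abs_fps (\<lambda>n. \<Sum>ks\<in>moment_words n. word_moment \<mu> \<nu> ks) = fps_X * fps_deriv G * (N oo G)"
    unfolding G_def N_def by (rule fps_ext) (simp add: sum_word_moment_eq_fps_nth)
  then have "Gser (\<lambda>n. \<Sum>ks\<in>moment_words n. word_moment \<mu> \<nu> ks) =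
      fls_X ^ 2 * fps_to_fls (fps_deriv G) * fps_to_fls (N oo G)"
    unfolding Gser_def
    by (simp add: fls_times_fps_to_fls power2_eq_square mult_ac)
  then show ?thesis
    unfolding subst deriv using \<open>G \<noteq> 0\<close> by (simp add: field_simps)
qed

theorem corollary3p2:
  fixes sa :: "complex \<Rightarrow> 'a::ring_1 \<Rightarrow> 'a" and \<phi> :: "'a \<Rightarrow> complex"
    and sf :: "complex \<Rightarrow> 'f::ring \<Rightarrow> 'f" and lm :: "'a \<Rightarrow> 'f \<Rightarrow> 'f"
    and rm :: "'f \<Rightarrow> 'a \<Rightarrow> 'f" and \<Phi> :: "'f \<Rightarrow> complex"
    and a :: 'a and f :: 'f
    and \<mu> \<nu> \<nu>t :: "nat \<Rightarrow> complex"
  assumes "ncps_typeB' sa \<phi> sf lm rm \<Phi>"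
    and "cyc_antimono_indep lm rm \<phi> \<Phi> (ualg_gen sa a) (alg_gen sf f)"
    and "\<mu> = (\<lambda>n. phiB \<phi> (bpow lm rm (a, 0) n))"
    and "\<nu> = (\<lambda>n. phiB' \<Phi> (bpow lm rm (0, f) n))"
    and "\<nu>t = (\<lambda>n. phiB' \<Phi> (bpow lm rm (a, f) n))"
  shows "(\<lambda>n. phiB \<phi> (bpow lm rm (a, f) n)) = \<mu>
    \<and> (\<forall>(sc :: complex \<Rightarrow> 'c::ring_1 \<Rightarrow> 'c) \<psi> \<psi>' b1 b2.
          inf_ncps sc \<psi> \<psi>' \<and>
          inf_free \<psi> \<psi>' (\<lambda>i::bool. if i then ualg_gen sc b1 else ualg_gen sc b2) \<and>
          (\<forall>n. \<psi> (b1 ^ n) = \<mu> n \<and> \<psi>' (b1 ^ n) = 0) \<and>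
          (\<forall>n. \<psi> (b2 ^ n) = (if n = 0 then 1 else 0) \<and> \<psi>' (b2 ^ n) = \<nu> n)
          \<longrightarrow> (\<lambda>n. \<psi>' ((b1 + b2) ^ n)) = \<nu>t)
    \<and> Gser \<nu>t = subst_z (Gser \<nu>) (Fser \<mu>) * zderiv (Fser \<mu>)"
proof -
  interpret cyc_antimono_pair sa \<phi> sf lm rm \<Phi> a f
    using assms(1,2) by unfold_locales
  have \<mu>: "\<mu> = (\<lambda>n. \<phi> (a ^ n))" and \<nu>: "\<nu> = (\<lambda>n. \<Phi> (snd (bpow lm rm (0, f) n)))"
    unfolding assms(3,4) phiB_def phiB'_def by (simp_all add: fst_bpow)
  have \<nu>t: "\<nu>t = (\<lambda>n. \<Sum>ks\<in>moment_words n. word_moment \<mu> \<nu> ks)"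
    unfolding assms(5) phiB'_def \<mu> \<nu> by (simp add: Phi_snd_bpow)
  have "(\<lambda>n. phiB \<phi> (bpow lm rm (a, f) n)) = \<mu>"
    unfolding \<mu> phiB_def by (simp add: fst_bpow)
  moreover have "(\<lambda>n. \<psi>' ((b1 + b2) ^ n)) = \<nu>t" if "inf_free_pair sc \<psi> \<psi>' b1 b2 \<mu> \<nu>"
    for sc :: "complex \<Rightarrow> 'c::ring_1 \<Rightarrow> 'c" and \<psi> \<psi>' b1 b2
    unfolding \<nu>t using inf_free_pair.psi'_power_sum[OF that] by simp
  moreover have "\<mu> 0 = 1" "\<nu> 0 = 0"
    using ncps clinear_fun_zero[OF Phi_linear] unfolding \<mu> \<nu> ncps_typeB'_def by simp_all
  then have "Gser \<nu>t = subst_z (Gser \<nu>) (Fser \<mu>) * zderiv (Fser \<mu>)"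
    unfolding \<nu>t by (rule Gser_sum_word_moment)
  ultimately show ?thesis
    unfolding inf_free_pair_def by blast
qed

end
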